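(* Let $N\ge2$ and let $\lambda_{\max}^N$ be the largest eigenvalue of an $N\times N$ random matrix from the GOE or from the GUE. Then $\lambda_{\max}^N$ is not infinitely divisible.
   Context: The GOE (resp. GUE) is the ensemble of $N\times N$ real symmetric (resp. complex Hermitian) random matrices $H$ whose independent entries (modulo symmetry) are centered Gaussian, with density proportional to $\exp(-\tfrac{\beta}{4}\mathrm{tr}H^2)$, $\beta=1$ (resp. $\beta=2$); the ordered eigenvalues $\lambda_1\le\dots\le\lambda_N$ have joint density proportional to $\prod_{i<j}|\lambda_i-\lambda_j|^\beta\exp(-\tfrac\beta4\sum_i\lambda_i^2)$. A random variable $X$ is infinitely divisible if for each $n\ge1$ there are i.i.d. $X_1,\dots,X_n$ with $X_1+\cdots+X_n$ equal in distribution to $X$. *)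

theory Defs
  imports "HOL-Probability.Probability"
begin

text \<open>Unnormalised joint density of the (unordered) eigenvalues of an N x N matrix
  from the Gaussian beta-ensemble (beta = 1: GOE, beta = 2: GUE), on R^N represented
  as functions {..<N} -> real.\<close>
definition ge_weight :: "nat \<Rightarrow> nat \<Rightarrow> (nat \<Rightarrow> real) \<Rightarrow> real" where
  "ge_weight \<beta> N x =
     (\<Prod>i<N. \<Prod>j\<in>{i<..<N}. \<bar>x i - x j\<bar> ^ \<beta>) * exp (- (real \<beta> / 4) * (\<Sum>i<N. (x i)\<^sup>2))"

definition ge_eigen_law :: "nat \<Rightarrow> nat \<Rightarrow> (nat \<Rightarrow> real) measure" where
  "ge_eigen_law \<beta> N =
     (let M = PiM {..<N} (\<lambda>_. lborel);
          Z = (\<integral>\<^sup>+ x. ennreal (ge_weight \<beta> N x) \<partial>M)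
      in density M (\<lambda>x. ennreal (ge_weight \<beta> N x) / Z))"

definition lambda_max_law :: "nat \<Rightarrow> nat \<Rightarrow> real measure" where
  "lambda_max_law \<beta> N = distr (ge_eigen_law \<beta> N) borel (\<lambda>x. Max (x ` {..<N}))"

fun conv_pow :: "real measure \<Rightarrow> nat \<Rightarrow> real measure" where
  "conv_pow \<nu> 0 = return borel 0"
| "conv_pow \<nu> (Suc n) = convolution \<nu> (conv_pow \<nu> n)"

definition infinitely_divisible :: "real measure \<Rightarrow> bool" where
  "infinitely_divisible \<mu> \<longleftrightarrow>
     (\<forall>n\<ge>1. \<exists>\<nu>. prob_space \<nu> \<and> sets \<nu> = sets borel \<and> conv_pow \<nu> n = \<mu>)"

end

theory Submission
  imports Defs "HOL-Real_Asymp.Real_Asymp"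
begin

text \<open>
  The fourth difference of \<open>t \<mapsto> exp (t x)\<close> with step \<open>h\<close> is \<open>exp (s x) (exp (h x) - 1)\<^sup>4 \<ge> 0\<close>,
  so every moment generating function has nonnegative fourth differences. If \<open>\<mu>\<close> is infinitely
  divisible with moment generating function \<open>F\<close>, then \<open>F powr (1 / n)\<close> is the moment generating function of
  an \<open>n\<close>-th convolution root, and \<open>ln F = lim n (F powr (1 / n) - 1)\<close> inherits the nonnegativity.

  For the largest eigenvalue, \<open>ln F t = t\<^sup>2 / \<beta> + O(t)\<close> as \<open>t \<rightarrow> \<infinity>\<close>: a single eigenvalue has to
  move. But the largest eigenvalue dominates the mean of the eigenvalues, so making it very negative forces all
  \<open>N\<close> of them down, and \<open>ln F (-u) \<le> u\<^sup>2 / (N \<beta>) + O(u)\<close>. The fourth difference of \<open>ln F\<close> at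
  \<open>-h, 0, h, 2h, 3h\<close> is then at most \<open>(1 / N - 1) h\<^sup>2 / \<beta> + O(h)\<close>, negative for large \<open>h\<close>.
\<close>

section \<open>Fourth differences\<close>

definition fourth_difference :: "(real \<Rightarrow> real) \<Rightarrow> real \<Rightarrow> real \<Rightarrow> real" where
  "fourth_difference f s h = f s - 4 * f (s + h) + 6 * f (s + 2*h) - 4 * f (s + 3*h) + f (s + 4*h)"

lemma fourth_difference_affine:
  "fourth_difference (\<lambda>t. a * (f t - c)) s h = a * fourth_difference f s h"
  by (simp add: fourth_difference_def algebra_simps)

lemma tendsto_fourth_difference:
  assumes "\<And>t. ((\<lambda>n. g n t) \<longlongrightarrow> f t) F"
  shows "((\<lambda>n. fourth_difference (g n) s h) \<longlongrightarrow> fourth_difference f s h) F"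
  unfolding fourth_difference_def by (intro tendsto_intros assms)

lemma fourth_difference_exp_nonneg: "0 \<le> fourth_difference (\<lambda>t. exp (t * x)) s h"
proof -
  define a u where "a = exp (s * x)" and "u = exp (h * x)"
  have e: "exp ((s + real k * h) * x) = a * u ^ k" for k :: nat
    by (simp add: a_def u_def distrib_right exp_add exp_of_nat_mult[symmetric] mult.assoc)
  have "fourth_difference (\<lambda>t. exp (t * x)) s h = a * (u - 1) ^ 4"
    using e[of 0] e[of 1] e[of 2] e[of 3] e[of 4] unfolding fourth_difference_def
    by (simp add: power4_eq_xxxx power3_eq_cube power2_eq_square algebra_simps)
  then show ?thesis by (simp add: a_def)
qed

lemma integral_exp_fourth_difference_nonneg:
  assumes "\<And>t. integrable M (\<lambda>x. exp (t * x))"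
  shows "0 \<le> fourth_difference (\<lambda>t. \<integral>x. exp (t * x) \<partial>M) s h"
proof -
  have "fourth_difference (\<lambda>t. \<integral>x. exp (t * x) \<partial>M) s h
      = (\<integral>x. fourth_difference (\<lambda>t. exp (t * x)) s h \<partial>M)"
    by (simp add: fourth_difference_def assms)
  also have "\<dots> \<ge> 0" by (intro integral_nonneg_AE AE_I2 fourth_difference_exp_nonneg)
  finally show ?thesis .
qed

lemma fourth_difference_negative_of_growth:
  fixes f :: "real \<Rightarrow> real"
  assumes "b' < b"
    and lower: "\<And>t. 0 \<le> t \<Longrightarrow> b * t\<^sup>2 - C\<^sub>0 \<le> f t"
    and upper: "\<And>t. 0 \<le> t \<Longrightarrow> f t \<le> b * t\<^sup>2 + B\<^sub>1 * t + C\<^sub>1"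
    and upper_left: "\<And>u. 0 \<le> u \<Longrightarrow> f (-u) \<le> b' * u\<^sup>2 + B\<^sub>2 * u + C\<^sub>2"
  obtains h where "fourth_difference f (-h) h < 0"
proof -
  define a where "a = b' - b"
  have "a < 0" using assms(1) by (simp add: a_def)
  then have "eventually (\<lambda>h. a * h\<^sup>2 + (B\<^sub>2 + 9 * B\<^sub>1) * h + (C\<^sub>2 + 8 * C\<^sub>0 + 7 * C\<^sub>1) < 0) at_top"
    by real_asymp
  then obtain h where h: "0 \<le> h" "a * h\<^sup>2 + (B\<^sub>2 + 9 * B\<^sub>1) * h + (C\<^sub>2 + 8 * C\<^sub>0 + 7 * C\<^sub>1) < 0"
    using eventually_happens[OF eventually_conj[OF eventually_ge_at_top[of 0]]] by auto
  have "fourth_difference f (-h) h = f (-h) - 4 * f 0 + 6 * f h - 4 * f (2*h) + f (3*h)"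
    by (simp add: fourth_difference_def)
  also have "\<dots> \<le> a * h\<^sup>2 + (B\<^sub>2 + 9 * B\<^sub>1) * h + (C\<^sub>2 + 8 * C\<^sub>0 + 7 * C\<^sub>1)"
    using upper_left[of h] lower[of 0] upper[of h] lower[of "2*h"] upper[of "3*h"] h(1)
    by (simp add: a_def power_mult_distrib algebra_simps)
  finally show ?thesis using h(2) by (intro that[of h]) linarith
qed

section \<open>Infinitely divisible laws\<close>

lemma sets_conv_pow [measurable_cong]: "sets (conv_pow \<nu> n) = sets borel"
  by (cases n) (simp_all add: convolution_def)

lemma prob_space_conv_pow:
  assumes "prob_space \<nu>" "sets \<nu> = sets borel"
  shows "prob_space (conv_pow \<nu> n)"
proof (induction n)
  case 0
  show ?case by (simp add: prob_space_return)
next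
  case (Suc n)
  interpret pair_prob_space \<nu> "conv_pow \<nu> n"
    using assms(1) Suc by (simp add: pair_prob_space_def pair_sigma_finite_def prob_space_imp_sigma_finite)
  have "(\<lambda>(x, y). x + y) \<in> borel_measurable (\<nu> \<Otimes>\<^sub>M conv_pow \<nu> n)"
    unfolding measurable_cong_sets[OF sets_pair_measure_cong[OF assms(2) sets_conv_pow] refl] by measurable
  then show ?case by (simp add: convolution_def P.prob_space_distr)
qed

lemma nn_integral_exp_conv_pow:
  assumes "prob_space \<nu>" "sets \<nu> = sets borel"
  shows "(\<integral>\<^sup>+x. exp (t * x) \<partial>conv_pow \<nu> n) = (\<integral>\<^sup>+x. exp (t * x) \<partial>\<nu>) ^ n"
proof (induction n)
  case 0
  show ?case by (simp add: nn_integral_return)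
next
  case (Suc n)
  have "(\<integral>\<^sup>+x. exp (t * x) \<partial>conv_pow \<nu> (Suc n))
      = (\<integral>\<^sup>+x. \<integral>\<^sup>+y. exp (t * x) * ennreal (exp (t * y)) \<partial>conv_pow \<nu> n \<partial>\<nu>)"
    using assms prob_space_conv_pow[OF assms] unfolding conv_pow.simps(2)
    by (subst nn_integral_convolution)
       (simp_all add: prob_space.finite_measure sets_conv_pow distrib_left exp_add ennreal_mult)
  also have "\<dots> = (\<integral>\<^sup>+x. exp (t * x) * (\<integral>\<^sup>+y. exp (t * y) \<partial>conv_pow \<nu> n) \<partial>\<nu>)"
    by (simp add: nn_integral_cmult measurable_cong_sets[OF sets_conv_pow refl])
  also have "\<dots> = (\<integral>\<^sup>+x. exp (t * x) \<partial>\<nu>) ^ Suc n"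
    by (simp add: Suc nn_integral_multc measurable_cong_sets[OF assms(2) refl])
  finally show ?case .
qed

lemma enn2real_power: "enn2real (x ^ n) = enn2real x ^ n"
  by (induction n) (simp_all add: enn2real_mult)

lemma integral_exp_conv_pow:
  assumes "prob_space \<nu>" "sets \<nu> = sets borel"
  shows "(\<integral>x. exp (t * x) \<partial>conv_pow \<nu> n) = (\<integral>x. exp (t * x) \<partial>\<nu>) ^ n"
  by (simp add: integral_eq_nn_integral nn_integral_exp_conv_pow[OF assms] enn2real_power
      measurable_cong_sets[OF sets_conv_pow refl] measurable_cong_sets[OF assms(2) refl])

lemma integrable_exp_conv_pow_root:
  assumes "prob_space \<nu>" "sets \<nu> = sets borel" "0 < n"
    and "integrable (conv_pow \<nu> n) (\<lambda>x. exp (t * x))"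
  shows "integrable \<nu> (\<lambda>x. exp (t * x))"
proof (rule integrableI_nonneg)
  have "(\<integral>\<^sup>+x. exp (t * x) \<partial>\<nu>) ^ n < \<infinity>"
    using integrableD(2)[OF assms(4)] by (simp add: nn_integral_exp_conv_pow[OF assms(1,2)] less_top)
  then show "(\<integral>\<^sup>+x. exp (t * x) \<partial>\<nu>) < \<infinity>"
    using assms(3) by (simp add: power_less_top_ennreal)
qed (simp_all add: measurable_cong_sets[OF assms(2) refl])

lemma integral_exp_pos:
  fixes M :: "real measure"
  assumes "prob_space M" "integrable M (\<lambda>x. exp (t * x))"
  shows "0 < (\<integral>x. exp (t * x) \<partial>M)"
proof -
  have "(\<integral>x. exp (t * x) \<partial>M) \<noteq> 0"
    using assms by (simp add: integral_nonneg_eq_0_iff_AE prob_space.AE_False)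
  then show ?thesis by (simp add: order_less_le)
qed

lemma infinitely_divisibleE:
  assumes "infinitely_divisible \<mu>" "1 \<le> n"
  obtains \<nu> where "prob_space \<nu>" "sets \<nu> = sets borel" "conv_pow \<nu> n = \<mu>"
  using assms unfolding infinitely_divisible_def by blast

lemma infinitely_divisible_prob_space:
  assumes "infinitely_divisible \<mu>"
  shows "prob_space \<mu>"
proof -
  obtain \<nu> where "prob_space \<nu>" "sets \<nu> = sets borel" "conv_pow \<nu> 1 = \<mu>"
    using infinitely_divisibleE[OF assms, of 1] by auto
  then show ?thesis using prob_space_conv_pow by metis
qed

lemma infinitely_divisible_root_mgf_fourth_difference_nonneg:
  assumes "infinitely_divisible \<mu>" "1 \<le> n" and "\<And>t. integrable \<mu> (\<lambda>x. exp (t * x))"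
  shows "0 \<le> fourth_difference (\<lambda>t. (\<integral>x. exp (t * x) \<partial>\<mu>) powr (1 / real n)) s h"
proof -
  obtain \<nu> where \<nu>: "prob_space \<nu>" "sets \<nu> = sets borel" and \<mu>: "conv_pow \<nu> n = \<mu>"
    using infinitely_divisibleE[OF assms(1,2)] by blast
  have int: "integrable \<nu> (\<lambda>x. exp (t * x))" for t
    using integrable_exp_conv_pow_root[OF \<nu> _ assms(3)[of t, folded \<mu>]] assms(2) by simp
  have "(\<integral>x. exp (t * x) \<partial>\<mu>) powr (1 / real n) = (\<integral>x. exp (t * x) \<partial>\<nu>)" for t
  proof -
    have pos: "0 < (\<integral>x. exp (t * x) \<partial>\<nu>)"
      using integral_exp_pos[OF \<nu>(1) int] .
    then have "(\<integral>x. exp (t * x) \<partial>\<mu>) = (\<integral>x. exp (t * x) \<partial>\<nu>) powr real n"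
      by (simp add: \<mu>[symmetric] integral_exp_conv_pow[OF \<nu>] powr_realpow)
    then show ?thesis using pos assms(2) by (simp add: powr_powr)
  qed
  then show ?thesis using integral_exp_fourth_difference_nonneg[OF int] by simp
qed

lemma tendsto_real_mult_root_minus_one:
  fixes p :: real assumes "0 < p"
  shows "(\<lambda>n. real n * (p powr (1 / real n) - 1)) \<longlonglongrightarrow> ln p"
  using assms by real_asymp

lemma infinitely_divisible_ln_mgf_fourth_difference_nonneg:
  assumes "infinitely_divisible \<mu>" and "\<And>t. integrable \<mu> (\<lambda>x. exp (t * x))"
  shows "0 \<le> fourth_difference (\<lambda>t. ln (\<integral>x. exp (t * x) \<partial>\<mu>)) s h"
proof (rule LIMSEQ_le_const)
  let ?F = "\<lambda>t. \<integral>x. exp (t * x) \<partial>\<mu>"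
  have "0 < ?F t" for t
    using integral_exp_pos[OF infinitely_divisible_prob_space[OF assms(1)] assms(2)] .
  then show "(\<lambda>n. fourth_difference (\<lambda>t. real n * (?F t powr (1 / real n) - 1)) s h)
      \<longlonglongrightarrow> fourth_difference (\<lambda>t. ln (?F t)) s h"
    by (intro tendsto_fourth_difference tendsto_real_mult_root_minus_one)
  show "\<exists>N. \<forall>n\<ge>N. 0 \<le> fourth_difference (\<lambda>t. real n * (?F t powr (1 / real n) - 1)) s h"
    using infinitely_divisible_root_mgf_fourth_difference_nonneg[OF assms(1) _ assms(2)]
    by (auto simp: fourth_difference_affine intro!: exI[of _ 1])
qed

section \<open>Gaussian integrals\<close>

lemma nn_integral_exp_gaussian:
  fixes c s :: real assumes "0 < c"
  shows "(\<integral>\<^sup>+u. exp (s * u - c * u\<^sup>2) \<partial>lborel) = ennreal (sqrt (pi / c) * exp (s\<^sup>2 / (4 * c)))"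
proof -
  define \<mu> \<sigma> where "\<mu> = s / (2 * c)" and "\<sigma> = sqrt (1 / (2 * c))"
  have "exp (s * u - c * u\<^sup>2) = sqrt (pi / c) * exp (s\<^sup>2 / (4 * c)) * normal_density \<mu> \<sigma> u" for u
  proof -
    have "sqrt (pi / c) * normal_density \<mu> \<sigma> u = exp (- c * (u - \<mu>)\<^sup>2)"
      using assms by (simp add: normal_density_def \<sigma>_def real_sqrt_divide field_simps)
    moreover have "s\<^sup>2 / (4 * c) + - c * (u - \<mu>)\<^sup>2 = s * u - c * u\<^sup>2"
      using assms by (simp add: \<mu>_def field_simps power2_eq_square)
    ultimately show ?thesis by (metis exp_add mult.commute mult.left_commute)
  qed
  then have "(\<integral>\<^sup>+u. exp (s * u - c * u\<^sup>2) \<partial>lborel)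
      = ennreal (sqrt (pi / c) * exp (s\<^sup>2 / (4 * c))) * (\<integral>\<^sup>+u. normal_density \<mu> \<sigma> u \<partial>lborel)"
    using assms by (simp add: ennreal_mult nn_integral_cmult)
  also have "(\<integral>\<^sup>+u. normal_density \<mu> \<sigma> u \<partial>lborel) = 1"
    using assms by (subst nn_integral_eq_integral) (auto simp: \<sigma>_def)
  finally show ?thesis by simp
qed

lemma nn_integral_exp_abs_gaussian_le:
  fixes a c :: real assumes "0 < c"
  shows "(\<integral>\<^sup>+u. exp (a * \<bar>u\<bar> - c * u\<^sup>2) \<partial>lborel) \<le> ennreal (2 * sqrt (pi / c) * exp (a\<^sup>2 / (4 * c)))"
proof -
  have "exp (a * \<bar>u\<bar> - c * u\<^sup>2) \<le> exp (a * u - c * u\<^sup>2) + exp ((- a) * u - c * u\<^sup>2)" for u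
    by (cases "0 \<le> u") (simp_all add: add_increasing add_increasing2)
  then have "(\<integral>\<^sup>+u. exp (a * \<bar>u\<bar> - c * u\<^sup>2) \<partial>lborel)
      \<le> (\<integral>\<^sup>+u. ennreal (exp (a * u - c * u\<^sup>2)) + exp ((- a) * u - c * u\<^sup>2) \<partial>lborel)"
    by (intro nn_integral_mono) (simp flip: ennreal_plus)
  also have "\<dots> = (\<integral>\<^sup>+u. exp (a * u - c * u\<^sup>2) \<partial>lborel) + (\<integral>\<^sup>+u. exp ((- a) * u - c * u\<^sup>2) \<partial>lborel)"
    by (rule nn_integral_add) auto
  also have "\<dots> = ennreal (2 * sqrt (pi / c) * exp (a\<^sup>2 / (4 * c)))"
    using assms by (simp only: nn_integral_exp_gaussian) (simp flip: ennreal_plus)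
  finally show ?thesis .
qed

lemma nn_integral_prod_exp_abs_gaussian_le:
  fixes a :: "nat \<Rightarrow> real" and c :: real assumes "0 < c"
  shows "(\<integral>\<^sup>+x. ennreal (\<Prod>i<N. exp (a i * \<bar>x i\<bar> - c * (x i)\<^sup>2)) \<partial>PiM {..<N} (\<lambda>_. lborel))
    \<le> ennreal ((2 * sqrt (pi / c)) ^ N * exp ((\<Sum>i<N. (a i)\<^sup>2) / (4 * c)))"
proof -
  interpret product_sigma_finite "\<lambda>_::nat. lborel"
    by (simp add: product_sigma_finite_def lborel.sigma_finite_measure_axioms)
  have "(\<integral>\<^sup>+x. ennreal (\<Prod>i<N. exp (a i * \<bar>x i\<bar> - c * (x i)\<^sup>2)) \<partial>PiM {..<N} (\<lambda>_. lborel))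
      = (\<Prod>i<N. \<integral>\<^sup>+u. exp (a i * \<bar>u\<bar> - c * u\<^sup>2) \<partial>lborel)"
    by (simp add: prod_ennreal[symmetric] product_nn_integral_prod
        [where f = "\<lambda>i u. ennreal (exp (a i * \<bar>u\<bar> - c * u\<^sup>2))"])
  also have "\<dots> \<le> (\<Prod>i<N. ennreal (2 * sqrt (pi / c) * exp ((a i)\<^sup>2 / (4 * c))))"
    by (intro prod_mono_ennreal nn_integral_exp_abs_gaussian_le assms)
  also have "\<dots> = ennreal ((2 * sqrt (pi / c)) ^ N * exp ((\<Sum>i<N. (a i)\<^sup>2) / (4 * c)))"
    using assms by (simp add: prod_ennreal prod.distrib exp_sum sum_divide_distrib)
  finally show ?thesis .
qed

section \<open>Exponential moments of the largest eigenvalue\<close>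

lemma ge_weight_nonneg: "0 \<le> ge_weight \<beta> N x"
  unfolding ge_weight_def by (intro mult_nonneg_nonneg prod_nonneg) auto

lemma measurable_ge_weight [measurable]: "ge_weight \<beta> N \<in> borel_measurable (PiM {..<N} (\<lambda>_. lborel))"
  unfolding ge_weight_def[abs_def] by measurable

lemma measurable_Max_image [measurable]:
  "(\<lambda>x::nat \<Rightarrow> real. Max (x ` {..<N})) \<in> borel_measurable (PiM {..<N} (\<lambda>_. lborel))"
  using borel_measurable_Max[of "{..<N}" "\<lambda>i x. x i" "PiM {..<N} (\<lambda>_. lborel)"] by simp

lemma abs_diff_power_le_exp: "\<bar>a - b\<bar> ^ n \<le> exp (real n * (\<bar>a\<bar> + \<bar>b\<bar>))"
proof -
  have "\<bar>a - b\<bar> \<le> exp (\<bar>a\<bar> + \<bar>b\<bar>)"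
    using abs_triangle_ineq4[of a b] exp_ge_add_one_self[of "\<bar>a\<bar> + \<bar>b\<bar>"] by linarith
  then have "\<bar>a - b\<bar> ^ n \<le> exp (\<bar>a\<bar> + \<bar>b\<bar>) ^ n" by (intro power_mono) auto
  then show ?thesis by (simp add: exp_of_nat_mult)
qed

lemma ge_weight_le:
  "ge_weight \<beta> N x \<le> (\<Prod>i<N. exp (2 * real N * real \<beta> * \<bar>x i\<bar> - real \<beta> / 4 * (x i)\<^sup>2))"
proof -
  have "(\<Prod>i<N. \<Prod>j\<in>{i<..<N}. \<bar>x i - x j\<bar> ^ \<beta>) \<le> (\<Prod>i<N. \<Prod>j\<in>{i<..<N}. exp (real \<beta> * (\<bar>x i\<bar> + \<bar>x j\<bar>)))"
    by (intro prod_mono conjI prod_nonneg abs_diff_power_le_exp) auto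
  also have "\<dots> = exp (\<Sum>i<N. \<Sum>j\<in>{i<..<N}. real \<beta> * (\<bar>x i\<bar> + \<bar>x j\<bar>))"
    by (simp add: exp_sum)
  also have "\<dots> \<le> exp (\<Sum>i<N. \<Sum>j<N. real \<beta> * (\<bar>x i\<bar> + \<bar>x j\<bar>))"
    by (subst exp_le_cancel_iff, intro sum_mono sum_mono2) auto
  also have "(\<Sum>i<N. \<Sum>j<N. real \<beta> * (\<bar>x i\<bar> + \<bar>x j\<bar>)) = (\<Sum>i<N. 2 * real N * real \<beta> * \<bar>x i\<bar>)"
    by (simp add: sum.distrib sum_distrib_left sum.swap[of _ "{..<N}" "{..<N}"] algebra_simps)
  finally have "ge_weight \<beta> N x \<le> exp (\<Sum>i<N. 2 * real N * real \<beta> * \<bar>x i\<bar>) * exp (- (real \<beta> / 4) * (\<Sum>i<N. (x i)\<^sup>2))"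
    unfolding ge_weight_def by (intro mult_right_mono) auto
  then show ?thesis
    by (simp add: exp_add[symmetric] exp_sum[symmetric] sum_distrib_left sum_subtractf sum_negf)
qed

lemma nn_integral_exp_abs_ge_weight_le:
  assumes "1 \<le> \<beta>"
  shows "(\<integral>\<^sup>+x. ennreal (exp (\<Sum>i<N. b i * \<bar>x i\<bar>) * ge_weight \<beta> N x) \<partial>PiM {..<N} (\<lambda>_. lborel))
    \<le> ennreal ((2 * sqrt (pi / (real \<beta> / 4))) ^ N * exp ((\<Sum>i<N. (b i + 2 * real N * real \<beta>)\<^sup>2) / real \<beta>))"
proof -
  have "exp (\<Sum>i<N. b i * \<bar>x i\<bar>) * ge_weight \<beta> N x
      \<le> (\<Prod>i<N. exp ((b i + 2 * real N * real \<beta>) * \<bar>x i\<bar> - real \<beta> / 4 * (x i)\<^sup>2))" for x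
  proof -
    have "exp (\<Sum>i<N. b i * \<bar>x i\<bar>) * ge_weight \<beta> N x
        \<le> exp (\<Sum>i<N. b i * \<bar>x i\<bar>) * (\<Prod>i<N. exp (2 * real N * real \<beta> * \<bar>x i\<bar> - real \<beta> / 4 * (x i)\<^sup>2))"
      by (intro mult_left_mono ge_weight_le) simp
    also have "\<dots> = (\<Prod>i<N. exp ((b i + 2 * real N * real \<beta>) * \<bar>x i\<bar> - real \<beta> / 4 * (x i)\<^sup>2))"
      by (simp add: exp_sum[symmetric] exp_add[symmetric] sum.distrib[symmetric] algebra_simps)
    finally show ?thesis .
  qed
  then have "(\<integral>\<^sup>+x. ennreal (exp (\<Sum>i<N. b i * \<bar>x i\<bar>) * ge_weight \<beta> N x) \<partial>PiM {..<N} (\<lambda>_. lborel))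
      \<le> (\<integral>\<^sup>+x. ennreal (\<Prod>i<N. exp ((b i + 2 * real N * real \<beta>) * \<bar>x i\<bar> - real \<beta> / 4 * (x i)\<^sup>2)) \<partial>PiM {..<N} (\<lambda>_. lborel))"
    by (intro nn_integral_mono ennreal_leI)
  also have "\<dots> \<le> ennreal ((2 * sqrt (pi / (real \<beta> / 4))) ^ N * exp ((\<Sum>i<N. (b i + 2 * real N * real \<beta>)\<^sup>2) / (4 * (real \<beta> / 4))))"
    using assms by (intro nn_integral_prod_exp_abs_gaussian_le) simp
  finally show ?thesis by simp
qed

lemma exp_Max_le_sum_exp_abs:
  fixes x :: "'a \<Rightarrow> real"
  assumes "0 \<le> t" "finite A" "A \<noteq> {}"
  shows "exp (t * Max (x ` A)) \<le> (\<Sum>k\<in>A. exp (t * \<bar>x k\<bar>))"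
proof -
  have "Max (x ` A) \<in> x ` A"
    using assms(2,3) by (intro Max_in) auto
  then obtain k where k: "k \<in> A" "Max (x ` A) = x k" by auto
  then have "exp (t * Max (x ` A)) \<le> exp (t * \<bar>x k\<bar>)"
    using assms(1) by (simp add: mult_left_mono)
  also have "\<dots> \<le> (\<Sum>k\<in>A. exp (t * \<bar>x k\<bar>))"
    using k(1) assms(2) by (intro member_le_sum) auto
  finally show ?thesis .
qed

lemma exp_neg_Max_le_exp_mean_abs:
  fixes x :: "'a \<Rightarrow> real"
  assumes "0 \<le> u" "finite A" "A \<noteq> {}"
  shows "exp (- u * Max (x ` A)) \<le> exp (\<Sum>i\<in>A. u / card A * \<bar>x i\<bar>)"
proof -
  have A: "0 < real (card A)" using assms(2,3) by (simp add: card_gt_0_iff)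
  have "(\<Sum>i\<in>A. x i) \<le> card A * Max (x ` A)"
    using sum_bounded_above[of A x "Max (x ` A)"] assms(2) by simp
  then have "- (u / card A) * (card A * Max (x ` A)) \<le> - (u / card A) * (\<Sum>i\<in>A. x i)"
    using assms(1) A by (intro mult_left_mono_neg) auto
  then have "- u * Max (x ` A) \<le> (\<Sum>i\<in>A. u / card A * - x i)"
    using A by (simp add: sum_distrib_left)
  also have "\<dots> \<le> (\<Sum>i\<in>A. u / card A * \<bar>x i\<bar>)"
    using assms(1) by (intro sum_mono mult_left_mono) auto
  finally show ?thesis by simp
qed

definition ge_max_laplace :: "nat \<Rightarrow> nat \<Rightarrow> real \<Rightarrow> ennreal" where
  "ge_max_laplace \<beta> N t =
     (\<integral>\<^sup>+x. ennreal (exp (t * Max (x ` {..<N})) * ge_weight \<beta> N x) \<partial>PiM {..<N} (\<lambda>_. lborel))"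

lemma nn_integral_exp_lambda_max_law:
  "(\<integral>\<^sup>+x. exp (t * x) \<partial>lambda_max_law \<beta> N) = ge_max_laplace \<beta> N t / ge_max_laplace \<beta> N 0"
proof -
  let ?M = "PiM {..<N} (\<lambda>_. lborel) :: (nat \<Rightarrow> real) measure"
  let ?Z = "ge_max_laplace \<beta> N 0"
  have law: "ge_eigen_law \<beta> N = density ?M (\<lambda>x. ennreal (ge_weight \<beta> N x) / ?Z)"
    by (simp add: ge_eigen_law_def ge_max_laplace_def Let_def)
  have "(\<integral>\<^sup>+x. exp (t * x) \<partial>lambda_max_law \<beta> N)
      = (\<integral>\<^sup>+x. ennreal (ge_weight \<beta> N x) / ?Z * exp (t * Max (x ` {..<N})) \<partial>?M)"
    unfolding lambda_max_law_def law
    by (simp add: nn_integral_distr nn_integral_density measurable_cong_sets[OF sets_density refl])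
  also have "\<dots> = (\<integral>\<^sup>+x. ennreal (exp (t * Max (x ` {..<N})) * ge_weight \<beta> N x) / ?Z \<partial>?M)"
    by (simp add: ennreal_mult ennreal_times_divide ge_weight_nonneg mult.commute)
  also have "\<dots> = ge_max_laplace \<beta> N t / ?Z"
    unfolding ge_max_laplace_def by (rule nn_integral_divide) simp
  finally show ?thesis .
qed

lemma ge_max_laplace_upper:
  assumes "1 \<le> \<beta>" "1 \<le> N"
  shows "\<exists>B C. \<forall>t\<ge>0. ge_max_laplace \<beta> N t \<le> ennreal (exp (t\<^sup>2 / real \<beta> + B * t + C))"
proof -
  define m K where "m = 2 * real N * real \<beta>" and "K = 2 * sqrt (pi / (real \<beta> / 4))"
  have "ge_max_laplace \<beta> N t
      \<le> ennreal (exp (t\<^sup>2 / real \<beta> + 2 * m / real \<beta> * t + (ln (real N) + real N * ln K + real N * m\<^sup>2 / real \<beta>)))"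
    if "0 \<le> t" for t
  proof -
    define b where "b k i = (if i = k then t else 0)" for k i :: nat
    have b_sum: "(\<Sum>i<N. b k i * \<bar>x i\<bar>) = t * \<bar>x k\<bar>" if "k < N" for k and x :: "nat \<Rightarrow> real"
      using that by (simp add: b_def if_distrib[of "\<lambda>a. a * _"] cong: if_cong)
    have "exp (t * Max (x ` {..<N})) \<le> (\<Sum>k<N. exp (\<Sum>i<N. b k i * \<bar>x i\<bar>))" for x :: "nat \<Rightarrow> real"
      using exp_Max_le_sum_exp_abs[OF \<open>0 \<le> t\<close>, of "{..<N}" x] assms(2) by (simp add: b_sum lessThan_empty_iff)
    then have "ge_max_laplace \<beta> N t
        \<le> (\<integral>\<^sup>+x. (\<Sum>k<N. ennreal (exp (\<Sum>i<N. b k i * \<bar>x i\<bar>) * ge_weight \<beta> N x)) \<partial>PiM {..<N} (\<lambda>_. lborel))"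
      unfolding ge_max_laplace_def
      by (intro nn_integral_mono)
         (simp add: sum_ennreal ge_weight_nonneg sum_distrib_right[symmetric] ennreal_leI mult_right_mono)
    also have "\<dots> = (\<Sum>k<N. \<integral>\<^sup>+x. ennreal (exp (\<Sum>i<N. b k i * \<bar>x i\<bar>) * ge_weight \<beta> N x) \<partial>PiM {..<N} (\<lambda>_. lborel))"
      by (rule nn_integral_sum) auto
    also have "\<dots> \<le> (\<Sum>k<N. ennreal (K ^ N * exp ((\<Sum>i<N. (b k i + m)\<^sup>2) / real \<beta>)))"
      unfolding m_def K_def by (intro sum_mono nn_integral_exp_abs_ge_weight_le assms(1))
    also have "\<dots> = (\<Sum>k<N. ennreal (K ^ N * exp ((t\<^sup>2 + 2 * m * t + real N * m\<^sup>2) / real \<beta>)))"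
    proof (intro sum.cong refl arg_cong[where f = "\<lambda>s. ennreal (K ^ N * exp (s / real \<beta>))"])
      fix k assume "k \<in> {..<N}"
      have "(b k i + m)\<^sup>2 = m\<^sup>2 + (if i = k then t\<^sup>2 + 2 * m * t else 0)" for i
        by (simp add: b_def power2_sum algebra_simps)
      then show "(\<Sum>i<N. (b k i + m)\<^sup>2) = t\<^sup>2 + 2 * m * t + real N * m\<^sup>2"
        using \<open>k \<in> {..<N}\<close> by (simp add: sum.distrib)
    qed
    also have "\<dots> = ennreal (real N * K ^ N * exp ((t\<^sup>2 + 2 * m * t + real N * m\<^sup>2) / real \<beta>))"
      by (simp add: ennreal_of_nat_eq_real_of_nat ennreal_mult K_def mult.assoc)
    also have "\<dots> = ennreal (exp (t\<^sup>2 / real \<beta> + 2 * m / real \<beta> * t + (ln (real N) + real N * ln K + real N * m\<^sup>2 / real \<beta>)))"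
    proof -
      have "(t\<^sup>2 + 2 * m * t + real N * m\<^sup>2) / real \<beta> = t\<^sup>2 / real \<beta> + 2 * m / real \<beta> * t + real N * m\<^sup>2 / real \<beta>"
        by (simp add: add_divide_distrib)
      moreover have "0 < real N" "0 < K" using assms by (simp_all add: K_def)
      ultimately show ?thesis by (simp add: exp_add exp_of_nat_mult)
    qed
    finally show ?thesis .
  qed
  then show ?thesis by blast
qed

lemma ge_max_laplace_upper_left:
  assumes "1 \<le> \<beta>" "1 \<le> N"
  shows "\<exists>B C. \<forall>u\<ge>0. ge_max_laplace \<beta> N (-u) \<le> ennreal (exp (u\<^sup>2 / (real N * real \<beta>) + B * u + C))"
proof -
  define m K where "m = 2 * real N * real \<beta>" and "K = 2 * sqrt (pi / (real \<beta> / 4))"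
  have N: "0 < real N" using assms(2) by simp
  have "ge_max_laplace \<beta> N (-u)
      \<le> ennreal (exp (u\<^sup>2 / (real N * real \<beta>) + 2 * m / real \<beta> * u + (real N * ln K + real N * m\<^sup>2 / real \<beta>)))"
    if "0 \<le> u" for u
  proof -
    have "exp (- u * Max (x ` {..<N})) \<le> exp (\<Sum>i<N. u / real N * \<bar>x i\<bar>)" for x :: "nat \<Rightarrow> real"
      using exp_neg_Max_le_exp_mean_abs[OF that, of "{..<N}" x] assms(2) by (simp add: lessThan_empty_iff)
    then have "ge_max_laplace \<beta> N (-u)
        \<le> (\<integral>\<^sup>+x. ennreal (exp (\<Sum>i<N. u / real N * \<bar>x i\<bar>) * ge_weight \<beta> N x) \<partial>PiM {..<N} (\<lambda>_. lborel))"
      unfolding ge_max_laplace_def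
      by (intro nn_integral_mono ennreal_leI mult_right_mono) (simp_all add: ge_weight_nonneg)
    also have "\<dots> \<le> ennreal (K ^ N * exp ((\<Sum>i<N. (u / real N + m)\<^sup>2) / real \<beta>))"
      unfolding m_def K_def by (intro nn_integral_exp_abs_ge_weight_le assms(1))
    also have "\<dots> = ennreal (exp (u\<^sup>2 / (real N * real \<beta>) + 2 * m / real \<beta> * u + (real N * ln K + real N * m\<^sup>2 / real \<beta>)))"
    proof -
      have "(\<Sum>i<N. (u / real N + m)\<^sup>2) / real \<beta> = u\<^sup>2 / (real N * real \<beta>) + 2 * m / real \<beta> * u + real N * m\<^sup>2 / real \<beta>"
        using N assms(1) by (simp add: power2_sum field_simps power2_eq_square)
      moreover have "0 < K" using assms(1) by (simp add: K_def)
      ultimately show ?thesis by (simp add: exp_add exp_of_nat_mult)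
    qed
    finally show ?thesis .
  qed
  then show ?thesis by blast
qed

lemma ge_weight_ge_of_separated:
  assumes "\<And>i j. i < j \<Longrightarrow> j < N \<Longrightarrow> 1 \<le> \<bar>x i - x j\<bar>"
  shows "exp (- (real \<beta> / 4) * (\<Sum>i<N. (x i)\<^sup>2)) \<le> ge_weight \<beta> N x"
proof -
  have "1 \<le> (\<Prod>i<N. \<Prod>j\<in>{i<..<N}. \<bar>x i - x j\<bar> ^ \<beta>)"
    using assms by (intro prod_ge_1 one_le_power) auto
  then show ?thesis
    unfolding ge_weight_def using mult_right_mono[of 1 _ "exp (- (real \<beta> / 4) * (\<Sum>i<N. (x i)\<^sup>2))"] by simp
qed

text \<open>The coordinate \<open>x 0\<close> sits next to the maximiser \<open>2 t / \<beta>\<close> of \<open>t x - \<beta> x\<^sup>2 / 4\<close>; the others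
  stay bounded and unit-separated from each other and from \<open>x 0\<close>.\<close>
definition lambda_max_box :: "nat \<Rightarrow> nat \<Rightarrow> real \<Rightarrow> (nat \<Rightarrow> real) set" where
  "lambda_max_box \<beta> N t = (\<Pi>\<^sub>E j\<in>{..<N}.
     if j = 0 then {2 * t / real \<beta> + 2 * real N .. 2 * t / real \<beta> + 2 * real N + 1}
     else {2 * real j .. 2 * real j + 1})"

lemma exp_Max_ge_weight_ge_on_box:
  assumes "1 \<le> \<beta>" "1 \<le> N" "0 \<le> t" and x: "x \<in> lambda_max_box \<beta> N t"
  shows "exp (t\<^sup>2 / real \<beta> - real \<beta> / 4 * ((2 * real N + 1)\<^sup>2 + 4 * real N ^ 3))
    \<le> exp (t * Max (x ` {..<N})) * ge_weight \<beta> N x"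
proof -
  have \<beta>: "0 < real \<beta>" using assms(1) by simp
  have x0: "2 * t / real \<beta> + 2 * real N \<le> x 0" "x 0 \<le> 2 * t / real \<beta> + 2 * real N + 1"
    using x assms(2) by (auto simp: lambda_max_box_def PiE_iff dest!: bspec[of _ _ 0])
  have xj: "2 * real j \<le> x j" "x j \<le> 2 * real j + 1" if "0 < j" "j < N" for j
    using x that by (auto simp: lambda_max_box_def PiE_iff dest!: bspec[of _ _ j])
  have "1 \<le> \<bar>x i - x j\<bar>" if "i < j" "j < N" for i j
  proof (cases "i = 0")
    case True
    have "0 < j" "real j + 1 \<le> real N" "0 \<le> 2 * t / real \<beta>"
      using that True assms(3) by simp_all
    then have "1 \<le> x 0 - x j"
      using x0 xj[of j] that(2) by linarith
    then show ?thesis using True by simp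
  next
    case False
    then have "0 < i" "real i + 1 \<le> real j" using that by simp_all
    then show ?thesis using xj[of i] xj[of j] that by linarith
  qed
  then have weight: "exp (- (real \<beta> / 4) * (\<Sum>i<N. (x i)\<^sup>2)) \<le> ge_weight \<beta> N x"
    by (rule ge_weight_ge_of_separated)
  have "(x i)\<^sup>2 \<le> (if i = 0 then (x 0)\<^sup>2 else 0) + 4 * (real N)\<^sup>2" if "i < N" for i
  proof (cases "i = 0")
    case False
    then have "(x i)\<^sup>2 \<le> (2 * real N)\<^sup>2"
      using xj[of i] that by (intro power_mono) auto
    then show ?thesis using False by (simp add: power_mult_distrib)
  qed simp
  then have "(\<Sum>i<N. (x i)\<^sup>2) \<le> (\<Sum>i<N. (if i = 0 then (x 0)\<^sup>2 else 0) + 4 * (real N)\<^sup>2)"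
    by (intro sum_mono) simp
  also have "\<dots> = (x 0)\<^sup>2 + 4 * real N ^ 3"
    using assms(2) by (simp add: sum.distrib power2_eq_square power3_eq_cube)
  finally have squares: "(\<Sum>i<N. (x i)\<^sup>2) \<le> (x 0)\<^sup>2 + 4 * real N ^ 3" .
  have "(x 0 - 2 * t / real \<beta>)\<^sup>2 \<le> (2 * real N + 1)\<^sup>2"
    using x0 by (intro power_mono) auto
  then have "real \<beta> / 4 * (x 0 - 2 * t / real \<beta>)\<^sup>2 \<le> real \<beta> / 4 * (2 * real N + 1)\<^sup>2"
    by (rule mult_left_mono) simp
  moreover have "t * x 0 - real \<beta> / 4 * (x 0)\<^sup>2 = t\<^sup>2 / real \<beta> - real \<beta> / 4 * (x 0 - 2 * t / real \<beta>)\<^sup>2"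
    using \<beta> by (simp add: field_simps power2_eq_square)
  moreover have "t * x 0 \<le> t * Max (x ` {..<N})"
    using assms(2,3) by (intro mult_left_mono Max_ge) auto
  moreover have "real \<beta> / 4 * (\<Sum>i<N. (x i)\<^sup>2) \<le> real \<beta> / 4 * (x 0)\<^sup>2 + real \<beta> / 4 * (4 * real N ^ 3)"
    using mult_left_mono[OF squares, of "real \<beta> / 4"] by (simp add: distrib_left)
  ultimately have "t\<^sup>2 / real \<beta> - real \<beta> / 4 * ((2 * real N + 1)\<^sup>2 + 4 * real N ^ 3)
      \<le> t * Max (x ` {..<N}) - real \<beta> / 4 * (\<Sum>i<N. (x i)\<^sup>2)"
    unfolding distrib_left by linarith
  then have "exp (t\<^sup>2 / real \<beta> - real \<beta> / 4 * ((2 * real N + 1)\<^sup>2 + 4 * real N ^ 3))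
      \<le> exp (t * Max (x ` {..<N})) * exp (- (real \<beta> / 4) * (\<Sum>i<N. (x i)\<^sup>2))"
    by (simp add: exp_add[symmetric])
  also have "\<dots> \<le> exp (t * Max (x ` {..<N})) * ge_weight \<beta> N x"
    using weight by (rule mult_left_mono) simp
  finally show ?thesis .
qed

lemma ge_max_laplace_lower:
  assumes "1 \<le> \<beta>" "1 \<le> N"
  shows "\<exists>C. \<forall>t\<ge>0. ennreal (exp (t\<^sup>2 / real \<beta> - C)) \<le> ge_max_laplace \<beta> N t"
proof -
  let ?C = "real \<beta> / 4 * ((2 * real N + 1)\<^sup>2 + 4 * real N ^ 3)"
  have "ennreal (exp (t\<^sup>2 / real \<beta> - ?C)) \<le> ge_max_laplace \<beta> N t" if "0 \<le> t" for t
  proof -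
    let ?M = "PiM {..<N} (\<lambda>_. lborel) :: (nat \<Rightarrow> real) measure"
    interpret product_sigma_finite "\<lambda>_::nat. lborel"
      by (simp add: product_sigma_finite_def lborel.sigma_finite_measure_axioms)
    define box where "box = lambda_max_box \<beta> N t"
    have "box \<in> sets ?M"
      unfolding box_def lambda_max_box_def by (intro sets_PiM_I_finite) auto
    moreover have "emeasure ?M box = 1"
      unfolding box_def lambda_max_box_def by (subst emeasure_PiM) (auto intro!: prod.neutral)
    ultimately have "ennreal (exp (t\<^sup>2 / real \<beta> - ?C)) = (\<integral>\<^sup>+x. ennreal (exp (t\<^sup>2 / real \<beta> - ?C)) * indicator box x \<partial>?M)"
      by (simp add: nn_integral_cmult_indicator)
    also have "\<dots> \<le> ge_max_laplace \<beta> N t"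
      unfolding ge_max_laplace_def
    proof (intro nn_integral_mono)
      fix x :: "nat \<Rightarrow> real"
      show "ennreal (exp (t\<^sup>2 / real \<beta> - ?C)) * indicator box x
          \<le> ennreal (exp (t * Max (x ` {..<N})) * ge_weight \<beta> N x)"
        using exp_Max_ge_weight_ge_on_box[OF assms \<open>0 \<le> t\<close>, of x]
        by (cases "x \<in> box") (simp_all add: box_def ennreal_leI)
    qed
    finally show ?thesis .
  qed
  then show ?thesis by blast
qed

lemma ge_max_laplace_finite:
  assumes "1 \<le> \<beta>" "1 \<le> N"
  shows "ge_max_laplace \<beta> N t < top"
proof (cases "0 \<le> t")
  case True
  obtain B C where "\<forall>t\<ge>0. ge_max_laplace \<beta> N t \<le> ennreal (exp (t\<^sup>2 / real \<beta> + B * t + C))"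
    using ge_max_laplace_upper[OF assms] by blast
  from this[rule_format, OF True] show ?thesis
    using le_less_trans ennreal_less_top by blast
next
  case False
  then have "0 \<le> - t" by simp
  obtain B C where "\<forall>u\<ge>0. ge_max_laplace \<beta> N (-u) \<le> ennreal (exp (u\<^sup>2 / (real N * real \<beta>) + B * u + C))"
    using ge_max_laplace_upper_left[OF assms] by blast
  from this[rule_format, OF \<open>0 \<le> - t\<close>] show ?thesis
    using le_less_trans ennreal_less_top by (metis minus_minus)
qed

lemma ge_max_laplace_zero_pos:
  assumes "1 \<le> \<beta>" "1 \<le> N"
  shows "0 < ge_max_laplace \<beta> N 0"
proof -
  obtain C where "\<forall>t\<ge>0. ennreal (exp (t\<^sup>2 / real \<beta> - C)) \<le> ge_max_laplace \<beta> N t"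
    using ge_max_laplace_lower[OF assms] by blast
  from this[rule_format, of 0] show ?thesis
    using less_le_trans[of 0 "ennreal (exp (- C))"] by simp
qed

lemma
  assumes "1 \<le> \<beta>" "1 \<le> N"
  shows integrable_exp_lambda_max_law: "integrable (lambda_max_law \<beta> N) (\<lambda>x. exp (t * x))"
    and integral_exp_lambda_max_law:
      "(\<integral>x. exp (t * x) \<partial>lambda_max_law \<beta> N)
        = enn2real (ge_max_laplace \<beta> N t) / enn2real (ge_max_laplace \<beta> N 0)"
proof -
  have "ge_max_laplace \<beta> N s = ennreal (enn2real (ge_max_laplace \<beta> N s))" for s
    using ge_max_laplace_finite[OF assms] by simp
  moreover have "0 < enn2real (ge_max_laplace \<beta> N 0)"
    using ge_max_laplace_finite[OF assms] ge_max_laplace_zero_pos[OF assms]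
    by (simp add: enn2real_positive_iff)
  ultimately have mgf: "(\<integral>\<^sup>+x. exp (t * x) \<partial>lambda_max_law \<beta> N)
      = ennreal (enn2real (ge_max_laplace \<beta> N t) / enn2real (ge_max_laplace \<beta> N 0))"
    unfolding nn_integral_exp_lambda_max_law by (metis divide_ennreal enn2real_nonneg)
  show "integrable (lambda_max_law \<beta> N) (\<lambda>x. exp (t * x))"
    using mgf by (intro integrableI_nonneg) (simp_all add: lambda_max_law_def)
  show "(\<integral>x. exp (t * x) \<partial>lambda_max_law \<beta> N)
      = enn2real (ge_max_laplace \<beta> N t) / enn2real (ge_max_laplace \<beta> N 0)"
    using mgf by (subst integral_eq_nn_integral) (simp_all add: lambda_max_law_def)
qed

lemma ln_enn2real_le:
  assumes "x \<le> ennreal (exp y)" "0 < x"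
  shows "ln (enn2real x) \<le> y"
proof -
  have "0 < enn2real x"
    using assms by (simp add: enn2real_positive_iff le_less_trans[OF assms(1)])
  moreover have "enn2real x \<le> exp y"
    using assms(1) by (simp add: enn2real_leI)
  ultimately show ?thesis using ln_le_cancel_iff[of "enn2real x" "exp y"] by simp
qed

lemma ln_enn2real_ge:
  assumes "ennreal (exp y) \<le> x" "x < top"
  shows "y \<le> ln (enn2real x)"
  using enn2real_mono[OF assms] by (simp add: ln_ge_iff less_le_trans[OF _ enn2real_mono[OF assms]])

lemma ln_ge_max_laplace_fourth_difference_negative:
  assumes "1 \<le> \<beta>" "2 \<le> N" and pos: "\<And>t. 0 < ge_max_laplace \<beta> N t"
  obtains h where "fourth_difference (\<lambda>t. ln (enn2real (ge_max_laplace \<beta> N t))) (-h) h < 0"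
proof -
  have N: "1 \<le> N" using assms(2) by simp
  obtain C\<^sub>0 where lower: "\<And>t. 0 \<le> t \<Longrightarrow> ennreal (exp (t\<^sup>2 / real \<beta> - C\<^sub>0)) \<le> ge_max_laplace \<beta> N t"
    using ge_max_laplace_lower[OF assms(1) N] by blast
  obtain B\<^sub>1 C\<^sub>1 where upper:
    "\<And>t. 0 \<le> t \<Longrightarrow> ge_max_laplace \<beta> N t \<le> ennreal (exp (t\<^sup>2 / real \<beta> + B\<^sub>1 * t + C\<^sub>1))"
    using ge_max_laplace_upper[OF assms(1) N] by blast
  obtain B\<^sub>2 C\<^sub>2 where upper_left:
    "\<And>u. 0 \<le> u \<Longrightarrow> ge_max_laplace \<beta> N (-u) \<le> ennreal (exp (u\<^sup>2 / (real N * real \<beta>) + B\<^sub>2 * u + C\<^sub>2))"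
    using ge_max_laplace_upper_left[OF assms(1) N] by blast
  show ?thesis
  proof (rule fourth_difference_negative_of_growth[of "1 / (real N * real \<beta>)" "1 / real \<beta>"])
    show "1 / (real N * real \<beta>) < 1 / real \<beta>"
      using assms(1,2) by (simp add: frac_less2)
    show "1 / real \<beta> * t\<^sup>2 - C\<^sub>0 \<le> ln (enn2real (ge_max_laplace \<beta> N t))" if "0 \<le> t" for t
      using ln_enn2real_ge[OF lower[OF that] ge_max_laplace_finite[OF assms(1) N]] by simp
    show "ln (enn2real (ge_max_laplace \<beta> N t)) \<le> 1 / real \<beta> * t\<^sup>2 + B\<^sub>1 * t + C\<^sub>1" if "0 \<le> t" for t
      using ln_enn2real_le[OF upper[OF that] pos] by simp
    show "ln (enn2real (ge_max_laplace \<beta> N (-u))) \<le> 1 / (real N * real \<beta>) * u\<^sup>2 + B\<^sub>2 * u + C\<^sub>2"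
      if "0 \<le> u" for u
      using ln_enn2real_le[OF upper_left[OF that] pos] by simp
  qed (rule that)
qed

theorem theorem2:
  fixes N \<beta> :: nat
  assumes "N \<ge> 2" and "\<beta> = 1 \<or> \<beta> = 2"
  shows "\<not> infinitely_divisible (lambda_max_law \<beta> N)"
proof
  assume ID: "infinitely_divisible (lambda_max_law \<beta> N)"
  have \<beta>: "1 \<le> \<beta>" and N: "1 \<le> N" using assms by auto
  let ?f = "\<lambda>t. ln (enn2real (ge_max_laplace \<beta> N t))"
  have int: "integrable (lambda_max_law \<beta> N) (\<lambda>x. exp (t * x))" for t
    by (rule integrable_exp_lambda_max_law[OF \<beta> N])
  have pos: "0 < ge_max_laplace \<beta> N t" for t
  proof -
    have "0 < (\<integral>x. exp (t * x) \<partial>lambda_max_law \<beta> N)"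
      using integral_exp_pos[OF infinitely_divisible_prob_space[OF ID] int] .
    then show ?thesis
      by (auto simp: integral_exp_lambda_max_law[OF \<beta> N] zero_less_divide_iff enn2real_positive_iff
          dest: order.strict_trans2[OF _ enn2real_nonneg])
  qed
  have "0 < enn2real (ge_max_laplace \<beta> N t)" for t
    using pos ge_max_laplace_finite[OF \<beta> N] by (simp add: enn2real_positive_iff)
  then have "ln (\<integral>x. exp (t * x) \<partial>lambda_max_law \<beta> N) = ?f t - ?f 0" for t
    unfolding integral_exp_lambda_max_law[OF \<beta> N] by (intro ln_divide_pos)
  then have "0 \<le> fourth_difference ?f s h" for s h
    using infinitely_divisible_ln_mgf_fourth_difference_nonneg[OF ID int, of s h]
      fourth_difference_affine[of 1 ?f "?f 0" s h] by simp
  moreover obtain h where "fourth_difference ?f (-h) h < 0"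
    using ln_ge_max_laplace_fourth_difference_negative[OF \<beta> assms(1) pos] by blast
  ultimately show False by (metis not_le)
qed

end
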